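(* Let $L,T$ be finite distributive lattices and $p:L\to T$ a map such that (i) $p|_{\mathcal{J}(L)}$ is a quotient map, (ii) $p(\mathcal{J}(L))=\mathcal{J}(T)$, and (iii) $p$ is a join-preserving quotient map of posets. Let $p_0=p|_{\mathcal{J}(L)}:\mathcal{J}(L)\to\mathcal{J}(T)$. Then $\mathbf{B}_T\circ p=\hat{p_0}\circ\mathbf{B}_L$, where $\mathbf{B}_L:L\to\mathcal{O}(\mathcal{J}(L))$, $\mathbf{B}_L(a)=\{x\in\mathcal{J}(L):x\le a\}$ and $\mathbf{B}_T$ analogously are the Birkhoff isomorphisms; in particular $p$ is isomorphic to the induced map $\hat{p_0}$.
   Context: $\mathcal{J}(L)$ is the set of join-irreducible elements of $L$ (elements $x\ne0$ such that $x=a\vee b$ implies $x=a$ or $x=b$), with the order inherited from $L$. A quotient map between posets is a surjective order-preserving map $\phi:A\to B$ such that for all $a\le b$ in $B$ there are $x\le y$ in $A$ with $\phi(x)=a,\phi(y)=b$. $\mathcal{O}(Q)$ denotes the down-sets of a poset $Q$ under inclusion, $\downarrow x=\{m:m\le x\}$; for a quotient map $p_0:Q\to R$ of finite posets, $\hat{p_0}(\emptyset)=\emptyset$ and $\hat{p_0}(A)=\bigcup_i\downarrow p_0(a_i)$ over the maximal elements $a_i$ of $A$. Two maps $f:A\to B$, $f':A'\to B'$ are isomorphic if there are isomorphisms $g_1:A\to A'$, $g_2:B\to B'$ with $g_2\circ f=f'\circ g_1$. *)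

theory Defs
  imports Main
begin

text \<open>Finite distributive lattices are modelled by types of class
  finite, distrib_lattice, order_bot (every finite lattice has a least element 0).\<close>

definition join_irreducible :: "'a::{distrib_lattice,order_bot} \<Rightarrow> bool" where
  "join_irreducible x \<longleftrightarrow> x \<noteq> bot \<and> (\<forall>a b. x = sup a b \<longrightarrow> x = a \<or> x = b)"

definition JI :: "'a::{distrib_lattice,order_bot} set" where
  "JI = {x. join_irreducible x}"

definition quotient_map :: "'a::order set \<Rightarrow> 'b::order set \<Rightarrow> ('a \<Rightarrow> 'b) \<Rightarrow> bool" where
  "quotient_map A B f \<longleftrightarrow>
     f ` A = B \<and>
     (\<forall>x\<in>A. \<forall>y\<in>A. x \<le> y \<longrightarrow> f x \<le> f y) \<and>
     (\<forall>a\<in>B. \<forall>b\<in>B. a \<le> b \<longrightarrow> (\<exists>x\<in>A. \<exists>y\<in>A. x \<le> y \<and> f x = a \<and> f y = b))"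

definition birkhoff :: "'a::{distrib_lattice,order_bot} \<Rightarrow> 'a set" where
  "birkhoff a = {x \<in> JI. x \<le> a}"

definition maximal_elems :: "'a::order set \<Rightarrow> 'a set" where
  "maximal_elems A = {a \<in> A. \<forall>y\<in>A. a \<le> y \<longrightarrow> y = a}"

definition hat :: "'r::order set \<Rightarrow> ('q::order \<Rightarrow> 'r) \<Rightarrow> 'q set \<Rightarrow> 'r set" where
  "hat R p0 A = (\<Union>a\<in>maximal_elems A. {m \<in> R. m \<le> p0 a})"

end

theory Submission
  imports Defs
begin

text \<open>In a finite distributive lattice the join-irreducibles are exactly the join-primes,
  and every element is a finite join of join-irreducibles. Hence for a join-preserving map
  \<open>p\<close> with \<open>p 0 = 0\<close>, a join-irreducible \<open>y \<le> p a\<close> already lies below \<open>p x\<close>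
  for some join-irreducible \<open>x \<le> a\<close>, and we may take \<open>x\<close> maximal in \<open>B(a)\<close>. This
  says precisely that \<open>B(p a)\<close> is the down-set generated by \<open>p\<close> of the maximal elements
  of \<open>B(a)\<close>.\<close>

lemma join_irreducible_le_supD:
  fixes y u v :: "'a::{distrib_lattice,order_bot}"
  assumes "join_irreducible y" "y \<le> sup u v"
  shows "y \<le> u \<or> y \<le> v"
proof -
  have "y = inf y (sup u v)" using assms(2) by (simp add: inf_absorb1)
  also have "\<dots> = sup (inf y u) (inf y v)" by (rule inf_sup_distrib1)
  finally have "y = inf y u \<or> y = inf y v"
    using assms(1) unfolding join_irreducible_def by blast
  then show ?thesis by (metis inf.absorb_iff1)
qed

lemma not_join_irreducible_split:
  fixes a :: "'a::{distrib_lattice,order_bot}"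
  assumes "a \<noteq> bot" "\<not> join_irreducible a"
  obtains u v where "u < a" "v < a" "a = sup u v"
  using assms unfolding join_irreducible_def by (metis sup_ge1 sup_ge2 order_less_le)

lemma wfp_less_finite: "wfp ((<) :: 'a::{finite,order} \<Rightarrow> 'a \<Rightarrow> bool)"
  using strict_partial_order_wfp_on_finite_set[of UNIV "(<) :: 'a \<Rightarrow> 'a \<Rightarrow> bool"]
  by (simp add: transp_on_def asymp_on_def) (metis less_trans less_asym)

lemma sup_hom_mono:
  fixes p :: "'a::semilattice_sup \<Rightarrow> 'b::semilattice_sup"
  assumes "\<forall>x y. p (sup x y) = sup (p x) (p y)"
  shows "mono p"
  by (rule monoI) (metis assms le_iff_sup)

lemma mono_surj_bot:
  fixes p :: "'a::order_bot \<Rightarrow> 'b::order_bot"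
  assumes "mono p" "surj p"
  shows "p bot = bot"
proof -
  obtain z where "bot = p z" using \<open>surj p\<close> by (rule surjE)
  moreover have "p bot \<le> p z" using \<open>mono p\<close> by (rule monoD) (rule bot_least)
  ultimately show ?thesis by (simp add: bot_unique)
qed

lemma join_irreducible_le_sup_hom_imageD:
  fixes p :: "'a::{finite,distrib_lattice,order_bot} \<Rightarrow> 'b::{distrib_lattice,order_bot}"
  assumes p_sup: "\<forall>x y. p (sup x y) = sup (p x) (p y)" and p_bot: "p bot = bot"
    and y: "join_irreducible y"
  shows "y \<le> p a \<Longrightarrow> \<exists>x. join_irreducible x \<and> x \<le> a \<and> y \<le> p x"
proof (induction a rule: wfp_induct_rule[OF wfp_less_finite])
  case (1 a)
  consider "a = bot" | "join_irreducible a" | u v where "u < a" "v < a" "a = sup u v"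
    using not_join_irreducible_split by blast
  then show ?case
  proof cases
    case 1
    with \<open>y \<le> p a\<close> p_bot y show ?thesis by (simp add: bot_unique join_irreducible_def)
  next
    case 2
    with \<open>y \<le> p a\<close> show ?thesis by blast
  next
    case (3 u v)
    with \<open>y \<le> p a\<close> p_sup have "y \<le> p u \<or> y \<le> p v"
      using join_irreducible_le_supD[OF y] by simp
    then obtain w where "w < a" "y \<le> p w" using 3 by blast
    with "1.IH" show ?thesis by (meson less_imp_le order_trans)
  qed
qed

lemma hat_eq_down_image:
  fixes p :: "'q::order \<Rightarrow> 'r::order"
  assumes "finite A" "mono_on A p"
  shows "hat R p A = {m \<in> R. \<exists>a\<in>A. m \<le> p a}"
proof (intro equalityI subsetI)
  fix m assume "m \<in> hat R p A"
  then show "m \<in> {m \<in> R. \<exists>a\<in>A. m \<le> p a}" by (auto simp: hat_def maximal_elems_def)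
next
  fix m assume "m \<in> {m \<in> R. \<exists>a\<in>A. m \<le> p a}"
  then obtain a where m: "m \<in> R" "a \<in> A" "m \<le> p a" by blast
  obtain a' where a': "a' \<in> A" "a \<le> a'" "\<forall>b\<in>A. a' \<le> b \<longrightarrow> a' = b"
    using finite_has_maximal2[OF \<open>finite A\<close> \<open>a \<in> A\<close>] by blast
  have "m \<le> p a'" using m a' \<open>mono_on A p\<close> by (meson mono_onD order_trans)
  with m a' show "m \<in> hat R p A" by (auto simp: hat_def maximal_elems_def)
qed

lemma birkhoff_sup_hom_image:
  fixes p :: "'a::{finite,distrib_lattice,order_bot} \<Rightarrow> 'b::{distrib_lattice,order_bot}"
  assumes p_sup: "\<forall>x y. p (sup x y) = sup (p x) (p y)" and p_bot: "p bot = bot"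
  shows "birkhoff (p a) = {y \<in> JI. \<exists>x\<in>birkhoff a. y \<le> p x}"
proof (intro equalityI subsetI)
  fix y assume "y \<in> birkhoff (p a)"
  then show "y \<in> {y \<in> JI. \<exists>x\<in>birkhoff a. y \<le> p x}"
    using join_irreducible_le_sup_hom_imageD[OF p_sup p_bot]
    by (fastforce simp: birkhoff_def JI_def)
next
  fix y assume "y \<in> {y \<in> JI. \<exists>x\<in>birkhoff a. y \<le> p x}"
  then show "y \<in> birkhoff (p a)"
    using sup_hom_mono[OF p_sup] by (auto simp: birkhoff_def dest: monoD intro: order_trans)
qed

theorem mainTheorem18:
  fixes p :: "'a::{finite,distrib_lattice,order_bot} \<Rightarrow> 'b::{finite,distrib_lattice,order_bot}"
  assumes "quotient_map (JI :: 'a set) (p ` JI) p"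
    and "p ` (JI :: 'a set) = (JI :: 'b set)"
    and "quotient_map (UNIV :: 'a set) (UNIV :: 'b set) p"
    and "\<forall>x y. p (sup x y) = sup (p x) (p y)"
  shows "\<forall>a. birkhoff (p a) = hat (JI :: 'b set) p (birkhoff a)"
proof
  fix a :: 'a
  have "mono p" using assms(4) by (rule sup_hom_mono)
  moreover have "surj p" using assms(3) by (simp add: quotient_map_def)
  ultimately have "p bot = bot" by (rule mono_surj_bot)
  then have "birkhoff (p a) = {y \<in> JI. \<exists>x\<in>birkhoff a. y \<le> p x}"
    using assms(4) by (simp add: birkhoff_sup_hom_image)
  also have "\<dots> = hat JI p (birkhoff a)"
    using \<open>mono p\<close> by (simp add: hat_eq_down_image monotone_on_subset[of UNIV])
  finally show "birkhoff (p a) = hat JI p (birkhoff a)" .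
qed

end
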